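(* Let $l\ge 0$ and $k\ge 1$ be integers, $n=k+l$, $e=2^l$, and $p\in[0,1]$ with $q=1-p$. Let $\mathcal{V}=\{\mathbf{r}=(r_0,\dots,r_n)\in\mathbb{Z}_{\ge 0}^{n+1}: \sum_{j=0}^n r_j=e\}$ (the set of "possible rows"), and for $\mathbf{r}\in\mathcal{V}$ put $\pi(\mathbf{r})=\sum_{j=0}^n r_j\,p^{j}q^{n-j}$ and $f(\mathbf{r})=-\pi(\mathbf{r})\log_2\pi(\mathbf{r})$. Let $V^*(l,k,p)$ be the optimal value of the linear program $$\text{maximize } \sum_{\mathbf{r}\in\mathcal{V}} f(\mathbf{r})\,x_{\mathbf{r}}\quad\text{subject to}\quad \sum_{\mathbf{r}\in\mathcal{V}} r_j\,x_{\mathbf{r}}=\binom{n}{j}\ (j=0,\dots,n),\qquad x_{\mathbf{r}}\ge 0\ (\mathbf{r}\in\mathcal{V}).$$ Then for every binning code $\mathcal{B}_1,\dots,\mathcal{B}_{2^k}$ (a partition of $\{0,1\}^n$ into $2^k$ bins, each of size $2^l$), used over the wiretap channel with noiseless main channel and BSC($p$) wiretap channel as described in the context, the eavesdropper's equivocation satisfies $H(M\mid Z^n)\le V^*(l,k,p)$.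
   Context: Wiretap model: a message $M$ is uniform on $\{1,\dots,2^k\}$; the encoder maps message $i$ to a codeword $X^n$ chosen uniformly at random from bin $\mathcal{B}_i$ (so $X^n$ is uniform on $\{0,1\}^n$). The legitimate receiver observes $X^n$ exactly; the eavesdropper observes $Z^n$, the output of a binary symmetric channel with crossover probability $p$ applied to $X^n$. For an observation $z^n$, $P(x^n\mid z^n)=p^{d_H(x^n,z^n)}q^{n-d_H(x^n,z^n)}$ ($d_H$ = Hamming distance), $P_{\mathcal{B}_i}(z^n)=\sum_{x^n\in\mathcal{B}_i}P(x^n\mid z^n)$, $H(M\mid Z^n=z^n)=-\sum_{i=1}^{2^k}P_{\mathcal{B}_i}(z^n)\log_2 P_{\mathcal{B}_i}(z^n)$, and the (total) equivocation is $H(M\mid Z^n)=2^{-n}\sum_{z^n\in\{0,1\}^n}H(M\mid Z^n=z^n)$. Convention $0\log_2 0=0$. *)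

theory Defs
  imports Complex_Main
begin

definition words :: "nat \<Rightarrow> bool list set" where
  "words n = {xs. length xs = n}"

definition hamming :: "bool list \<Rightarrow> bool list \<Rightarrow> nat" where
  "hamming xs ys = card {i. i < length xs \<and> xs ! i \<noteq> ys ! i}"

definition hterm :: "real \<Rightarrow> real" where
  "hterm t = (if t = 0 then 0 else - t * log 2 t)"

definition binning_code :: "nat \<Rightarrow> nat \<Rightarrow> (nat \<Rightarrow> bool list set) \<Rightarrow> bool" where
  "binning_code l k B \<longleftrightarrow>
     (\<forall>i\<in>{1..2^k}. B i \<subseteq> words (k + l) \<and> card (B i) = 2^l) \<and>
     (\<Union>i\<in>{1..2^k}. B i) = words (k + l) \<and>
     (\<forall>i\<in>{1..2^k}. \<forall>j\<in>{1..2^k}. i \<noteq> j \<longrightarrow> B i \<inter> B j = {})"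

definition post :: "real \<Rightarrow> nat \<Rightarrow> bool list \<Rightarrow> bool list \<Rightarrow> real" where
  "post p n x z = p ^ hamming x z * (1 - p) ^ (n - hamming x z)"

definition bin_prob :: "real \<Rightarrow> nat \<Rightarrow> bool list set \<Rightarrow> bool list \<Rightarrow> real" where
  "bin_prob p n Bi z = (\<Sum>x\<in>Bi. post p n x z)"

definition equivocation :: "nat \<Rightarrow> nat \<Rightarrow> real \<Rightarrow> (nat \<Rightarrow> bool list set) \<Rightarrow> real" where
  "equivocation l k p B =
     (1 / 2 ^ (k + l)) * (\<Sum>z\<in>words (k + l). \<Sum>i\<in>{1..2^k}. hterm (bin_prob p (k + l) (B i) z))"

definition rows :: "nat \<Rightarrow> nat \<Rightarrow> (nat \<Rightarrow> nat) set" where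
  "rows l k = {r. (\<forall>j>k + l. r j = 0) \<and> (\<Sum>j\<le>k + l. r j) = 2 ^ l}"

definition row_pi :: "nat \<Rightarrow> nat \<Rightarrow> real \<Rightarrow> (nat \<Rightarrow> nat) \<Rightarrow> real" where
  "row_pi l k p r = (\<Sum>j\<le>k + l. real (r j) * p ^ j * (1 - p) ^ (k + l - j))"

definition row_f :: "nat \<Rightarrow> nat \<Rightarrow> real \<Rightarrow> (nat \<Rightarrow> nat) \<Rightarrow> real" where
  "row_f l k p r = hterm (row_pi l k p r)"

definition lp_feasible :: "nat \<Rightarrow> nat \<Rightarrow> ((nat \<Rightarrow> nat) \<Rightarrow> real) \<Rightarrow> bool" where
  "lp_feasible l k x \<longleftrightarrow>
     (\<forall>r\<in>rows l k. x r \<ge> 0) \<and>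
     (\<forall>j\<le>k + l. (\<Sum>r\<in>rows l k. real (r j) * x r) = real ((k + l) choose j))"

definition lp_objective :: "nat \<Rightarrow> nat \<Rightarrow> real \<Rightarrow> ((nat \<Rightarrow> nat) \<Rightarrow> real) \<Rightarrow> real" where
  "lp_objective l k p x = (\<Sum>r\<in>rows l k. row_f l k p r * x r)"

definition Vstar :: "nat \<Rightarrow> nat \<Rightarrow> real \<Rightarrow> real" where
  "Vstar l k p = Sup {lp_objective l k p x | x. lp_feasible l k x}"

end

theory Submission
  imports Defs
begin

text \<open>
  For a bin \<open>B i\<close> and an observation \<open>z\<close>, count the codewords of \<open>B i\<close> at each Hamming
  distance from \<open>z\<close>. This distance profile is a possible row, and \<open>P_B i(z)\<close> is exactly
  \<open>\<pi>\<close> of that row. Giving each row the weight \<open>2^-n\<close> times the number of pairs \<open>(i, z)\<close>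
  that produce it yields a feasible point of the LP: since the bins partition \<open>{0,1}^n\<close>,
  the profiles of all bins at a fixed \<open>z\<close> add up to the sphere sizes \<open>n choose j\<close>.
  The objective value of this point is the equivocation, which is therefore at most the
  optimum.
\<close>

lemma finite_words: "finite (words n)"
  using finite_lists_length_eq[of "UNIV :: bool set" n] by (simp add: words_def)

lemma card_words: "card (words n) = 2 ^ n"
  using card_lists_length_eq[of "UNIV :: bool set" n] by (simp add: words_def)

lemma hamming_le:
  assumes "x \<in> words n"
  shows "hamming x z \<le> n"
proof -
  have "card {i. i < length x \<and> x ! i \<noteq> z ! i} \<le> card {..<length x}"
    by (intro card_mono) auto
  then show ?thesis using assms by (simp add: hamming_def words_def)
qed

lemma card_hamming_sphere:
  assumes "z \<in> words n"
  shows "card {x \<in> words n. hamming x z = j} = n choose j"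
proof -
  define diff where "diff x = {i. i < n \<and> x ! i \<noteq> z ! i}" for x
  let ?sphere = "{x \<in> words n. hamming x z = j}"
  have "inj_on diff ?sphere"
  proof (rule inj_onI)
    fix x y assume "x \<in> ?sphere" "y \<in> ?sphere" "diff x = diff y"
    then show "x = y"
      by (intro nth_equalityI) (auto simp: words_def diff_def set_eq_iff)
  qed
  moreover have "diff ` ?sphere = {S. S \<subseteq> {..<n} \<and> card S = j}"
  proof
    show "diff ` ?sphere \<subseteq> {S. S \<subseteq> {..<n} \<and> card S = j}"
      by (auto simp: diff_def hamming_def words_def)
  next
    show "{S. S \<subseteq> {..<n} \<and> card S = j} \<subseteq> diff ` ?sphere"
    proof
      fix S assume S: "S \<in> {S. S \<subseteq> {..<n} \<and> card S = j}"
      define x where "x = map (\<lambda>i. (i \<in> S) \<noteq> z ! i) [0..<n]"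
      have "diff x = S" using S by (auto simp: diff_def x_def)
      moreover have "hamming x z = card (diff x)"
        by (simp add: hamming_def diff_def x_def)
      ultimately show "S \<in> diff ` ?sphere"
        using S by (auto simp: words_def x_def intro!: image_eqI[of _ _ x])
    qed
  qed
  ultimately show ?thesis
    using card_image n_subsets[of "{..<n}" j] by fastforce
qed

lemma finite_rows: "finite (rows l k)"
proof (rule finite_subset)
  show "rows l k \<subseteq> {r. \<forall>j. (j \<in> {..k + l} \<longrightarrow> r j \<in> {..2 ^ l}) \<and> (j \<notin> {..k + l} \<longrightarrow> r j = 0)}"
  proof (intro subsetI CollectI allI conjI impI)
    fix r j assume r: "r \<in> rows l k"
    show "r j \<in> {..2 ^ l}" if "j \<in> {..k + l}"
    proof -
      have "r j \<le> (\<Sum>j\<le>k + l. r j)" using that by (intro member_le_sum) auto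
      then show ?thesis using r by (simp add: rows_def)
    qed
    show "r j = 0" if "j \<notin> {..k + l}" using r that by (simp add: rows_def)
  qed
qed (rule finite_set_of_finite_funs; simp)

lemma sum_lp_feasible:
  assumes "lp_feasible l k x"
  shows "(\<Sum>r\<in>rows l k. x r) = 2 ^ k"
proof -
  have "(\<Sum>r\<in>rows l k. x r) * 2 ^ l = (\<Sum>r\<in>rows l k. x r * (\<Sum>j\<le>k + l. real (r j)))"
    by (simp add: sum_distrib_right rows_def flip: of_nat_sum)
  also have "\<dots> = (\<Sum>j\<le>k + l. \<Sum>r\<in>rows l k. real (r j) * x r)"
    by (simp only: sum_distrib_left mult.commute) (rule sum.swap)
  also have "\<dots> = (\<Sum>j\<le>k + l. real ((k + l) choose j))"
    using assms by (simp add: lp_feasible_def)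
  also have "\<dots> = 2 ^ k * 2 ^ l"
    by (simp add: choose_row_sum power_add flip: of_nat_sum)
  finally show ?thesis by simp
qed

lemma lp_objective_le_Vstar:
  assumes "lp_feasible l k x"
  shows "lp_objective l k p x \<le> Vstar l k p"
  unfolding Vstar_def
proof (rule cSup_upper)
  show "lp_objective l k p x \<in> {lp_objective l k p x | x. lp_feasible l k x}"
    using assms by blast
  show "bdd_above {lp_objective l k p x | x. lp_feasible l k x}"
  proof (rule bdd_aboveI, clarify)
    fix y assume y: "lp_feasible l k y"
    have y_nonneg: "y r \<ge> 0" if "r \<in> rows l k" for r
      using y that by (simp add: lp_feasible_def)
    have "y r \<le> 2 ^ k" if "r \<in> rows l k" for r
      using member_le_sum[of r "rows l k" y] that y_nonneg finite_rows sum_lp_feasible[OF y]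
      by simp
    with y_nonneg have "row_f l k p r * y r \<le> \<bar>row_f l k p r\<bar> * 2 ^ k"
      if "r \<in> rows l k" for r
      using that by (metis abs_ge_self abs_ge_zero mult_mono)
    then show "lp_objective l k p y \<le> (\<Sum>r\<in>rows l k. \<bar>row_f l k p r\<bar> * 2 ^ k)"
      unfolding lp_objective_def by (rule sum_mono)
  qed
qed

definition dist_profile :: "bool list set \<Rightarrow> bool list \<Rightarrow> nat \<Rightarrow> nat" where
  "dist_profile A z j = card {x \<in> A. hamming x z = j}"

lemma dist_profile_in_rows:
  assumes "A \<subseteq> words (k + l)" and "card A = 2 ^ l"
  shows "dist_profile A z \<in> rows l k"
proof -
  have fin: "finite A" using assms(1) finite_words finite_subset by blast
  have dist_le: "hamming x z \<le> k + l" if "x \<in> A" for x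
    using assms(1) that hamming_le by blast
  have "(\<Sum>j\<le>k + l. dist_profile A z j) = (\<Sum>j\<le>k + l. \<Sum>x\<in>{x \<in> A. hamming x z = j}. 1)"
    by (simp add: dist_profile_def)
  also have "\<dots> = card A"
    using sum.group[OF fin _ , of "{..k + l}" "\<lambda>x. hamming x z" "\<lambda>_. 1 :: nat"] dist_le by auto
  finally have "(\<Sum>j\<le>k + l. dist_profile A z j) = 2 ^ l"
    using assms(2) by simp
  moreover have "dist_profile A z j = 0" if "j > k + l" for j
  proof -
    have "{x \<in> A. hamming x z = j} = {}" using that dist_le by fastforce
    then show ?thesis unfolding dist_profile_def by (simp only: card.empty)
  qed
  ultimately show ?thesis
    by (simp add: rows_def)
qed

lemma bin_prob_eq_row_pi:
  assumes "A \<subseteq> words (k + l)"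
  shows "bin_prob p (k + l) A z = row_pi l k p (dist_profile A z)"
proof -
  have fin: "finite A" using assms finite_words finite_subset by blast
  have dist_le: "hamming x z \<le> k + l" if "x \<in> A" for x
    using assms that hamming_le by blast
  have "bin_prob p (k + l) A z
      = (\<Sum>j\<le>k + l. \<Sum>x\<in>{x \<in> A. hamming x z = j}. post p (k + l) x z)"
    unfolding bin_prob_def by (rule sum.group[symmetric]) (use fin dist_le in auto)
  also have "\<dots> = (\<Sum>j\<le>k + l. real (dist_profile A z j) * p ^ j * (1 - p) ^ (k + l - j))"
    by (intro sum.cong refl) (simp add: post_def dist_profile_def)
  finally show ?thesis unfolding row_pi_def .
qed

lemma sum_dist_profile_bins:
  assumes "binning_code l k B" and "z \<in> words (k + l)"
  shows "(\<Sum>i\<in>{1..2 ^ k}. dist_profile (B i) z j) = (k + l) choose j"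
proof -
  have bins: "\<And>i. i \<in> {1..2 ^ k} \<Longrightarrow> B i \<subseteq> words (k + l)"
    "(\<Union>i\<in>{1..2 ^ k}. B i) = words (k + l)"
    "\<And>i i'. i \<in> {1..2 ^ k} \<Longrightarrow> i' \<in> {1..2 ^ k} \<Longrightarrow> i \<noteq> i' \<Longrightarrow> B i \<inter> B i' = {}"
    using assms(1) by (simp_all add: binning_code_def)
  have "(\<Sum>i\<in>{1..2 ^ k}. dist_profile (B i) z j)
      = card (\<Union>i\<in>{1..2 ^ k}. {x \<in> B i. hamming x z = j})"
    unfolding dist_profile_def
  proof (rule card_UN_disjoint[symmetric])
    show "\<forall>i\<in>{1..2 ^ k}. finite {x \<in> B i. hamming x z = j}"
    proof
      fix i :: nat assume "i \<in> {1..2 ^ k}"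
      with bins(1) have "finite (B i)" by (meson finite_subset finite_words)
      then show "finite {x \<in> B i. hamming x z = j}" by simp
    qed
    show "\<forall>i\<in>{1..2 ^ k}. \<forall>i'\<in>{1..2 ^ k}. i \<noteq> i' \<longrightarrow>
        {x \<in> B i. hamming x z = j} \<inter> {x \<in> B i'. hamming x z = j} = {}"
      using bins(3) by blast
  qed simp
  also have "(\<Union>i\<in>{1..2 ^ k}. {x \<in> B i. hamming x z = j}) = {x \<in> words (k + l). hamming x z = j}"
    using bins(2) by blast
  finally show ?thesis using card_hamming_sphere[OF assms(2)] by simp
qed

definition profile_weight :: "nat \<Rightarrow> nat \<Rightarrow> (nat \<Rightarrow> bool list set) \<Rightarrow> (nat \<Rightarrow> nat) \<Rightarrow> real" where
  "profile_weight l k B r =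
     card {(i, z) \<in> {1..2 ^ k} \<times> words (k + l). dist_profile (B i) z = r} / 2 ^ (k + l)"

lemma sum_rows_profile_weight:
  fixes g :: "(nat \<Rightarrow> nat) \<Rightarrow> real"
  assumes "binning_code l k B"
  shows "(\<Sum>r\<in>rows l k. g r * profile_weight l k B r)
    = (\<Sum>z\<in>words (k + l). \<Sum>i\<in>{1..2 ^ k}. g (dist_profile (B i) z)) / 2 ^ (k + l)"
proof -
  let ?S = "{1..2 ^ k} \<times> words (k + l)"
  let ?prof = "\<lambda>(i, z). dist_profile (B i) z"
  have fibre_sum: "(\<Sum>s\<in>{s \<in> ?S. ?prof s = r}. g (?prof s)) = g r * profile_weight l k B r * 2 ^ (k + l)"
    for r
  proof -
    define F where "F = {(i, z) \<in> ?S. dist_profile (B i) z = r}"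
    have "{s \<in> ?S. ?prof s = r} = F" by (auto simp: F_def)
    moreover have "(\<Sum>s\<in>F. g (?prof s)) = (\<Sum>s\<in>F. g r)"
      by (rule sum.cong) (auto simp: F_def)
    ultimately show ?thesis
      unfolding profile_weight_def F_def[symmetric] by simp
  qed
  have "?prof ` ?S \<subseteq> rows l k"
    using assms by (auto simp: binning_code_def intro!: dist_profile_in_rows)
  then have "(\<Sum>r\<in>rows l k. \<Sum>s\<in>{s \<in> ?S. ?prof s = r}. g (?prof s)) = (\<Sum>s\<in>?S. g (?prof s))"
    by (intro sum.group) (simp_all add: finite_rows finite_words)
  then have "(\<Sum>r\<in>rows l k. g r * profile_weight l k B r) * 2 ^ (k + l) = (\<Sum>s\<in>?S. g (?prof s))"
    by (simp only: fibre_sum sum_distrib_right)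
  also have "\<dots> = (\<Sum>i\<in>{1..2 ^ k}. \<Sum>z\<in>words (k + l). g (dist_profile (B i) z))"
    by (simp add: sum.cartesian_product prod.case_distrib)
  also have "\<dots> = (\<Sum>z\<in>words (k + l). \<Sum>i\<in>{1..2 ^ k}. g (dist_profile (B i) z))"
    by (rule sum.swap)
  finally show ?thesis
    by (simp add: field_simps)
qed

lemma lp_feasible_profile_weight:
  assumes "binning_code l k B"
  shows "lp_feasible l k (profile_weight l k B)"
  unfolding lp_feasible_def
proof (intro conjI ballI allI impI)
  fix r show "profile_weight l k B r \<ge> 0" by (simp add: profile_weight_def)
next
  fix j assume "j \<le> k + l"
  have "(\<Sum>z\<in>words (k + l). \<Sum>i\<in>{1..2 ^ k}. real (dist_profile (B i) z j))
      = (\<Sum>z\<in>words (k + l). real ((k + l) choose j))"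
    using sum_dist_profile_bins[OF assms] by (simp flip: of_nat_sum)
  then show "(\<Sum>r\<in>rows l k. real (r j) * profile_weight l k B r) = real ((k + l) choose j)"
    by (simp add: sum_rows_profile_weight[OF assms] card_words)
qed

lemma lp_objective_profile_weight:
  assumes "binning_code l k B"
  shows "lp_objective l k p (profile_weight l k B) = equivocation l k p B"
proof -
  have "bin_prob p (k + l) (B i) z = row_pi l k p (dist_profile (B i) z)" if "i \<in> {1..2 ^ k}" for i z
    using assms that by (intro bin_prob_eq_row_pi) (simp add: binning_code_def)
  then show ?thesis
    by (simp add: lp_objective_def sum_rows_profile_weight[OF assms] equivocation_def row_f_def)
qed

theorem lemma1:
  fixes l k :: nat and p :: real and B :: "nat \<Rightarrow> bool list set"
  assumes "k \<ge> 1" and "0 \<le> p" and "p \<le> 1"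
    and "binning_code l k B"
  shows "equivocation l k p B \<le> Vstar l k p"
  using lp_objective_le_Vstar[OF lp_feasible_profile_weight[OF assms(4)], of p]
  by (simp add: lp_objective_profile_weight[OF assms(4)])

end
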